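(* Let $\sigma$ be a realizable multiset. If $\sigma=\sigma_1\cup\dots\cup\sigma_k$ (union of multisets, i.e. $\sigma_1,\dots,\sigma_k$ partition $\sigma$ counting multiplicity), where each $\sigma_i$ is realizable, then $s_1(\sigma_i)\le s_1(\sigma)$ for every $i$.
   Context: A multiset $\sigma=\{\lambda_1,\dots,\lambda_n\}$ of complex numbers is realizable if there exists an $n\times n$ matrix with all entries real and nonnegative whose eigenvalues, counted with algebraic multiplicity, are exactly $\lambda_1,\dots,\lambda_n$. For a multiset $\tau$, $s_1(\tau)$ denotes the sum of its elements counted with multiplicity. *)

theory Defs
  imports "Jordan_Normal_Form.Char_Poly" "HOL-Library.Multiset"
begin

definition realizable :: "complex multiset \<Rightarrow> bool" where
  "realizable \<sigma> \<longleftrightarrow> (\<exists>n (A :: real mat).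
      A \<in> carrier_mat n n \<and>
      (\<forall>i<n. \<forall>j<n. A $$ (i, j) \<ge> 0) \<and>
      char_poly (map_mat complex_of_real A) = (\<Prod>a\<in>#\<sigma>. [:- a, 1:]))"

definition s1 :: "complex multiset \<Rightarrow> complex" where
  "s1 \<tau> = sum_mset \<tau>"

end

theory Submission
  imports Defs "Jordan_Normal_Form.Schur_Decomposition"
begin

text \<open>The trace of a realizable multiset's realizing matrix is its spectral sum, and as a
trace of a nonnegative matrix it is a nonnegative real. With complex numbers ordered
componentwise (real parts compared, imaginary parts equal), the spectral sum of the union
is the sum of the nonnegative spectral sums of the parts, hence dominates each of them.\<close>

definition trace :: "'a::comm_ring_1 mat \<Rightarrow> 'a" where
  "trace M = (\<Sum>i<dim_row M. M $$ (i, i))"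

lemma trace_mult_comm:
  fixes X Y :: "'a::comm_ring_1 mat"
  assumes "X \<in> carrier_mat n n" "Y \<in> carrier_mat n n"
  shows "trace (X * Y) = trace (Y * X)"
proof -
  have "trace (X * Y) = (\<Sum>i<n. \<Sum>k<n. X $$ (i, k) * Y $$ (k, i))"
    using assms by (simp add: trace_def scalar_prod_def lessThan_atLeast0)
  also have "\<dots> = (\<Sum>k<n. \<Sum>i<n. Y $$ (k, i) * X $$ (i, k))"
    by (subst sum.swap) (simp add: mult.commute)
  also have "\<dots> = trace (Y * X)"
    using assms by (simp add: trace_def scalar_prod_def lessThan_atLeast0)
  finally show ?thesis .
qed

lemma similar_mat_wit_trace:
  fixes A B P Q :: "'a::comm_ring_1 mat"
  assumes "A \<in> carrier_mat n n" "similar_mat_wit A B P Q"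
  shows "trace A = trace B"
proof -
  note wit = similar_mat_witD2[OF assms]
  have "trace A = trace (P * (B * Q))"
    using wit by (simp add: assoc_mult_mat[of P n n B n Q n])
  also have "\<dots> = trace ((B * Q) * P)"
    using wit by (intro trace_mult_comm[of _ n]) auto
  also have "\<dots> = trace (B * (Q * P))"
    using wit by (simp add: assoc_mult_mat[of B n n Q n P n])
  also have "\<dots> = trace B"
    using wit by simp
  finally show ?thesis .
qed

text \<open>A triangular Schur form has the eigenvalues on its diagonal and is similar to the matrix.\<close>

lemma trace_eq_sum_eigenvalues:
  fixes A :: "'a::conjugatable_ordered_field mat"
  assumes A: "A \<in> carrier_mat n n"
    and char_poly: "char_poly A = (\<Prod>a\<in>#\<sigma>. [:- a, 1:])"
  shows "trace A = sum_mset \<sigma>"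
proof -
  obtain es where es: "mset es = \<sigma>"
    using ex_mset by blast
  have "char_poly A = (\<Prod>e\<leftarrow>es. [:- e, 1:])"
    using char_poly es by (metis prod_mset_prod_list mset_map)
  moreover obtain U P Q where schur: "schur_decomposition A es = (U, P, Q)"
    by (cases "schur_decomposition A es") auto
  ultimately have sim: "similar_mat_wit A U P Q" and diag: "diag_mat U = es"
    using schur_decomposition[OF A] by auto
  have "trace U = sum_list es"
    unfolding diag[symmetric] diag_mat_def trace_def
    by (simp add: sum_list_sum_nth lessThan_atLeast0)
  then show ?thesis
    using similar_mat_wit_trace[OF A sim] es by (metis sum_mset_sum_list)
qed

lemma realizable_imp_s1_nonneg:
  assumes "realizable \<tau>"
  shows "s1 \<tau> \<ge> 0"
proof -
  obtain n and A :: "real mat" where A: "A \<in> carrier_mat n n"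
    and nonneg: "\<forall>i<n. \<forall>j<n. A $$ (i, j) \<ge> 0"
    and char_poly: "char_poly (map_mat complex_of_real A) = (\<Prod>a\<in>#\<tau>. [:- a, 1:])"
    using assms unfolding realizable_def by blast
  have "s1 \<tau> = trace (map_mat complex_of_real A)"
    using trace_eq_sum_eigenvalues[OF _ char_poly] A by (simp add: s1_def)
  also have "\<dots> = complex_of_real (\<Sum>i<n. A $$ (i, i))"
    using A by (simp add: trace_def)
  moreover have "(\<Sum>i<n. A $$ (i, i)) \<ge> 0"
    using nonneg by (intro sum_nonneg) simp
  ultimately show ?thesis
    by (simp del: of_real_sum add: less_eq_complex_def)
qed

lemma s1_sum_list: "s1 (sum_list parts) = sum_list (map s1 parts)"
  by (induction parts) (simp_all add: s1_def)

theorem lemma1: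
  fixes \<sigma> :: "complex multiset" and parts :: "complex multiset list"
  assumes "realizable \<sigma>"
    and "\<sigma> = sum_list parts"
    and "\<forall>\<tau> \<in> set parts. realizable \<tau>"
  shows "\<forall>\<tau> \<in> set parts. Im (s1 \<tau>) = 0 \<and> Im (s1 \<sigma>) = 0 \<and> Re (s1 \<tau>) \<le> Re (s1 \<sigma>)"
proof
  fix \<tau> assume \<tau>: "\<tau> \<in> set parts"
  have "0 \<le> s1 \<tau>"
    using \<tau> assms(3) realizable_imp_s1_nonneg by blast
  moreover have "s1 \<tau> \<le> s1 \<sigma>"
    unfolding assms(2) s1_sum_list
    using \<tau> assms(3) realizable_imp_s1_nonneg by (intro member_le_sum_list) auto
  ultimately show "Im (s1 \<tau>) = 0 \<and> Im (s1 \<sigma>) = 0 \<and> Re (s1 \<tau>) \<le> Re (s1 \<sigma>)"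
    by (simp add: less_eq_complex_def)
qed

end
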